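(* \textsc{Short Choice} is a total search problem: for every $n\ge 2$ and every instance (universe $U$ with $|U|=2^n-2$ and predicates $P_0,\dots,P_{n-2}$), a solution exists.
   Context: \textsc{Short Choice}: The universe $U$ is a set of $2^n-2$ objects, each represented by a distinct $n$-bit string. The input is a sequence of predicates $P_0,\dots,P_{n-2}$ given by poly($n$)-size circuits, with $P_i:U^{i+2}\to\{0,1\}$. A Long Choice subcertificate is a sequence of distinct elements $a_0,\dots,a_k\in U$ such that for every $i$ with $0\le i<k$ and every $j$ with $i<j\le k$, $P_i(a_0,\dots,a_i,a_j)=P_i(a_0,\dots,a_i,a_{i+1})$. An element $x\in U\setminus\{a_0,\dots,a_k\}$ extends the subcertificate if $a_0,\dots,a_k,x$ is again a Long Choice subcertificate. A solution of \textsc{Short Choice} consists of an integer $k$ with $0\le k\le n-2$, a Long Choice subcertificate $a_0,\dots,a_k$, and a bit $c\in\{0,1\}$ such that there is no $x$ extending $a_0,\dots,a_k$ with $P_k(a_0,\dots,a_k,x)=c$. *)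

theory Defs
  imports Main
begin

text \<open>A sequence a_0,...,a_k is a list of length k+1. The predicate family is
  P :: nat => 'a list => bool, where P i is applied to lists of length i+2
  (the arguments a_0,...,a_i,y).\<close>

definition long_choice_subcert :: "(nat \<Rightarrow> 'a list \<Rightarrow> bool) \<Rightarrow> 'a set \<Rightarrow> 'a list \<Rightarrow> bool" where
  "long_choice_subcert P U as \<longleftrightarrow>
     as \<noteq> [] \<and> distinct as \<and> set as \<subseteq> U \<and>
     (\<forall>i j. i < length as - 1 \<and> i < j \<and> j < length as \<longrightarrow>
        P i (take (i+1) as @ [as ! j]) = P i (take (i+1) as @ [as ! (i+1)]))"

definition extends_subcert :: "(nat \<Rightarrow> 'a list \<Rightarrow> bool) \<Rightarrow> 'a set \<Rightarrow> 'a list \<Rightarrow> 'a \<Rightarrow> bool" where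
  "extends_subcert P U as x \<longleftrightarrow>
     x \<in> U - set as \<and> long_choice_subcert P U (as @ [x])"

definition short_choice_solution :: "nat \<Rightarrow> (nat \<Rightarrow> 'a list \<Rightarrow> bool) \<Rightarrow> 'a set \<Rightarrow> nat \<Rightarrow> 'a list \<Rightarrow> bool \<Rightarrow> bool" where
  "short_choice_solution n P U k as c \<longleftrightarrow>
     k \<le> n - 2 \<and> length as = k + 1 \<and> long_choice_subcert P U as \<and>
     \<not> (\<exists>x. extends_subcert P U as x \<and> P k (as @ [x]) = c)"

end

theory Submission
  imports Defs
begin

text \<open>Suppose there is no solution. Then every subcertificate \<open>a\<^sub>0, \<dots>, a\<^sub>k\<close> with
  \<open>k \<le> n - 2\<close> has extensions \<open>x\<close> of both colours \<open>P\<^sub>k(a\<^sub>0, \<dots>, a\<^sub>k, x)\<close>. Appending an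
  element \<open>x\<close> of the rarer colour, the extensions of the longer subcertificate are exactly
  the other elements of that colour class, so their number \<open>E'\<close> satisfies
  \<open>2 E' + 2 \<le> E\<close>. Starting from \<open>E = |U| - 1\<close>, the greedy chain thus keeps
  \<open>2\<^sup>k (E + 2) \<le> |U| + 1 < 2\<^sup>n\<close>, and at \<open>k = n - 2\<close> only one extension is left,
  although both colours must still occur.\<close>

lemma long_choice_subcert_snoc:
  assumes "as \<noteq> []"
  shows "long_choice_subcert P U (as @ [y]) \<longleftrightarrow>
    long_choice_subcert P U as \<and> y \<in> U \<and> y \<notin> set as \<and>
    (\<forall>i < length as - 1. P i (take (i+1) as @ [y]) = P i (take (i+1) as @ [as ! (i+1)]))"
  (is "_ \<longleftrightarrow> _ \<and> _ \<and> _ \<and> ?last")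
proof -
  let ?old = "\<forall>i j. i < length as - 1 \<and> i < j \<and> j < length as \<longrightarrow>
          P i (take (i+1) as @ [as ! j]) = P i (take (i+1) as @ [as ! (i+1)])"
  let ?new = "\<forall>i j. i < length as \<and> i < j \<and> j < length as + 1 \<longrightarrow>
          P i (take (i+1) (as @ [y]) @ [(as @ [y]) ! j]) = P i (take (i+1) (as @ [y]) @ [(as @ [y]) ! (i+1)])"
  have "?new \<longleftrightarrow> ?old \<and> ?last"
  proof
    assume new: ?new
    show "?old \<and> ?last"
    proof (intro conjI allI impI)
      fix i j assume "i < length as - 1 \<and> i < j \<and> j < length as"
      then show "P i (take (i+1) as @ [as ! j]) = P i (take (i+1) as @ [as ! (i+1)])"
        using new[rule_format, of i j] by (simp add: nth_append)
    next
      fix i assume "i < length as - 1"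
      then have "i + 1 < length as" by simp
      then show "P i (take (i+1) as @ [y]) = P i (take (i+1) as @ [as ! (i+1)])"
        using new[rule_format, of i "length as"] by (simp add: nth_append)
    qed
  next
    assume old_last: "?old \<and> ?last"
    show ?new
    proof (intro allI impI)
      fix i j assume ij: "i < length as \<and> i < j \<and> j < length as + 1"
      consider (earlier) "j < length as" | (last) "j = length as" "i < length as - 1" | (adjacent) "j = i + 1"
        using ij by linarith
      then show "P i (take (i+1) (as @ [y]) @ [(as @ [y]) ! j]) = P i (take (i+1) (as @ [y]) @ [(as @ [y]) ! (i+1)])"
      proof cases
        case earlier
        with ij have "i < length as - 1" by linarith
        with earlier show ?thesis
          using ij old_last[THEN conjunct1, rule_format, of i j] by (simp add: nth_append)
      next
        case last
        then have "i + 1 < length as" by linarith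
        with last show ?thesis
          using old_last[THEN conjunct2, rule_format, of i] by (simp add: nth_append)
      next
        case adjacent
        then show ?thesis by simp
      qed
    qed
  qed
  then show ?thesis
    using assms unfolding long_choice_subcert_def by auto
qed

definition extensions :: "(nat \<Rightarrow> 'a list \<Rightarrow> bool) \<Rightarrow> 'a set \<Rightarrow> 'a list \<Rightarrow> 'a set" where
  "extensions P U as = {x. extends_subcert P U as x}"

lemma extensions_snoc:
  assumes as: "long_choice_subcert P U as" and x: "x \<in> extensions P U as"
  shows "extensions P U (as @ [x]) =
    {y \<in> extensions P U as - {x}. P (length as - 1) (as @ [y]) = P (length as - 1) (as @ [x])}"
proof (rule set_eqI)
  fix y
  have ne: "as \<noteq> []" using as unfolding long_choice_subcert_def by simp
  then obtain m where m: "length as = Suc m" by (cases as) auto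
  have asx: "long_choice_subcert P U (as @ [x])"
    using x unfolding extensions_def extends_subcert_def by simp
  let ?agree = "\<lambda>bs i. P i (take (i+1) bs @ [y]) = P i (take (i+1) bs @ [bs ! (i+1)])"
  have "take (i+1) (as @ [x]) = take (i+1) as" "(as @ [x]) ! (i+1) = as ! (i+1)" if "i < m" for i
    using that m by (simp_all add: nth_append)
  moreover have "take (m+1) (as @ [x]) = as" "(as @ [x]) ! (m+1) = x"
    using m nth_append_length[of as x] by simp_all
  ultimately have agree_snoc: "(\<forall>i < length as. ?agree (as @ [x]) i) \<longleftrightarrow>
      P (length as - 1) (as @ [y]) = P (length as - 1) (as @ [x]) \<and> (\<forall>i < length as - 1. ?agree as i)"
    by (simp add: m All_less_Suc conj_commute)
  have "y \<in> extensions P U (as @ [x]) \<longleftrightarrow>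
      y \<in> U \<and> y \<notin> set as \<and> y \<noteq> x \<and> (\<forall>i < length as. ?agree (as @ [x]) i)"
    using asx long_choice_subcert_snoc[of "as @ [x]" P U y]
    unfolding extensions_def extends_subcert_def by auto
  moreover have "y \<in> extensions P U as \<longleftrightarrow> y \<in> U \<and> y \<notin> set as \<and> (\<forall>i < length as - 1. ?agree as i)"
    using as long_choice_subcert_snoc[OF ne, of P U y]
    unfolding extensions_def extends_subcert_def by auto
  ultimately show "y \<in> extensions P U (as @ [x]) \<longleftrightarrow>
      y \<in> {y \<in> extensions P U as - {x}. P (length as - 1) (as @ [y]) = P (length as - 1) (as @ [x])}"
    using agree_snoc by blast
qed

lemma finite_extensions: "finite U \<Longrightarrow> finite (extensions P U as)"
  unfolding extensions_def extends_subcert_def by (rule rev_finite_subset) auto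

lemma extensions_singleton: "a \<in> U \<Longrightarrow> extensions P U [a] = U - {a}"
  unfolding extensions_def extends_subcert_def long_choice_subcert_def by auto

lemma ex_fibre_card_le_half:
  fixes f :: "'a \<Rightarrow> bool"
  assumes "finite A"
  shows "\<exists>c. 2 * card {y \<in> A. f y = c} \<le> card A"
proof -
  have "card A = card ({y \<in> A. f y = True} \<union> {y \<in> A. f y = False})"
    by (rule arg_cong[where f = card]) auto
  also have "\<dots> = card {y \<in> A. f y = True} + card {y \<in> A. f y = False}"
    using assms by (intro card_Un_disjoint) auto
  finally have sum: "card A = card {y \<in> A. f y = True} + card {y \<in> A. f y = False}" .
  show ?thesis
  proof (cases "card {y \<in> A. f y = True} \<le> card {y \<in> A. f y = False}")
    case True
    with sum have "2 * card {y \<in> A. f y = True} \<le> card A" by linarith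
    then show ?thesis ..
  next
    case False
    with sum have "2 * card {y \<in> A. f y = False} \<le> card A" by linarith
    then show ?thesis ..
  qed
qed

lemma ex_extension_halves_extensions:
  assumes U: "finite U" and as: "long_choice_subcert P U as"
    and both: "\<And>c. \<exists>x \<in> extensions P U as. P (length as - 1) (as @ [x]) = c"
  shows "\<exists>x \<in> extensions P U as. 2 * card (extensions P U (as @ [x])) + 2 \<le> card (extensions P U as)"
proof -
  let ?E = "extensions P U as"
  let ?class = "\<lambda>c. {y \<in> ?E. P (length as - 1) (as @ [y]) = c}"
  have fin: "finite ?E" using U by (rule finite_extensions)
  obtain c where small: "2 * card (?class c) \<le> card ?E"
    using ex_fibre_card_le_half[OF fin, of "\<lambda>y. P (length as - 1) (as @ [y])"] by blast
  obtain x where x: "x \<in> ?E" "P (length as - 1) (as @ [x]) = c"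
    using both by blast
  have "extensions P U (as @ [x]) = ?class c - {x}"
    using extensions_snoc[OF as x(1)] x(2) by auto
  moreover have "x \<in> ?class c" using x by simp
  ultimately have "card (extensions P U (as @ [x])) + 1 = card (?class c)"
    using fin card_Suc_Diff1[of "?class c" x] by simp
  with small have "2 * card (extensions P U (as @ [x])) + 2 \<le> card ?E" by linarith
  with x(1) show ?thesis ..
qed

lemma ex_subcert_with_few_extensions:
  assumes U: "finite U" "U \<noteq> {}"
    and both: "\<And>as c. long_choice_subcert P U as \<Longrightarrow> length as \<le> m \<Longrightarrow>
      \<exists>x \<in> extensions P U as. P (length as - 1) (as @ [x]) = c"
  shows "k < m \<Longrightarrow> \<exists>as. long_choice_subcert P U as \<and> length as = k + 1 \<and>
      2 ^ k * (card (extensions P U as) + 2) \<le> card U + 1"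
proof (induction k)
  case 0
  obtain a where a: "a \<in> U" using U(2) by blast
  then have "long_choice_subcert P U [a]"
    unfolding long_choice_subcert_def by simp
  moreover have "card (extensions P U [a]) + 2 = card U + 1"
  proof -
    have "card U > 0" using a U(1) card_gt_0_iff by blast
    then show ?thesis using a U(1) by (simp add: extensions_singleton)
  qed
  ultimately show ?case by auto
next
  case (Suc k)
  then obtain as where as: "long_choice_subcert P U as" "length as = k + 1"
      and bound: "2 ^ k * (card (extensions P U as) + 2) \<le> card U + 1"
    by auto
  obtain x where x: "x \<in> extensions P U as"
      and halved: "2 * card (extensions P U (as @ [x])) + 2 \<le> card (extensions P U as)"
    using ex_extension_halves_extensions[OF U(1) as(1) both[OF as(1)]] as(2) Suc.prems by auto
  have "2 ^ Suc k * (card (extensions P U (as @ [x])) + 2)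
      = 2 ^ k * (2 * card (extensions P U (as @ [x])) + 2 + 2)"
    by simp
  also have "\<dots> \<le> 2 ^ k * (card (extensions P U as) + 2)"
    using halved by (intro mult_le_mono2) simp
  also have "\<dots> \<le> card U + 1"
    by (rule bound)
  finally have "2 ^ Suc k * (card (extensions P U (as @ [x])) + 2) \<le> card U + 1" .
  moreover have "long_choice_subcert P U (as @ [x])"
    using x unfolding extensions_def extends_subcert_def by simp
  ultimately show ?case using as(2) by auto
qed

lemma short_choice_total:
  assumes U: "finite U" "U \<noteq> {}" and "2 \<le> n" and small: "card U + 2 \<le> 2 ^ n"
  shows "\<exists>k as c. short_choice_solution n P U k as c"
proof (rule ccontr)
  assume no_solution: "\<not> (\<exists>k as c. short_choice_solution n P U k as c)"
  have both: "\<exists>x \<in> extensions P U as. P (length as - 1) (as @ [x]) = c"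
    if "long_choice_subcert P U as" "length as \<le> n - 1" for as c
  proof -
    have "length as = length as - 1 + 1" "length as - 1 \<le> n - 2"
      using that by (auto simp: long_choice_subcert_def)
    then show ?thesis
      using that no_solution unfolding short_choice_solution_def extensions_def by blast
  qed
  have "n - 2 < n - 1" using \<open>2 \<le> n\<close> by simp
  then obtain as where as: "long_choice_subcert P U as" "length as = n - 2 + 1"
      and bound: "2 ^ (n - 2) * (card (extensions P U as) + 2) \<le> card U + 1"
    using ex_subcert_with_few_extensions[where m = "n - 1", OF U both] by blast
  have "length as \<le> n - 1" using as(2) \<open>2 \<le> n\<close> by simp
  then obtain x y where "x \<in> extensions P U as" "y \<in> extensions P U as" "x \<noteq> y"
    using both[OF as(1), of True] both[OF as(1), of False] by fastforce
  then have "card {x, y} \<le> card (extensions P U as)"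
    using finite_extensions[OF U(1)] by (intro card_mono) auto
  with \<open>x \<noteq> y\<close> have two: "(2::nat) ^ 2 \<le> card (extensions P U as) + 2" by simp
  have "(2::nat) ^ n = 2 ^ (n - 2) * 2 ^ 2"
    using \<open>2 \<le> n\<close> by (metis le_add_diff_inverse2 power_add)
  also have "\<dots> \<le> 2 ^ (n - 2) * (card (extensions P U as) + 2)"
    using two by (rule mult_le_mono2)
  also have "\<dots> \<le> card U + 1"
    by (rule bound)
  finally show False
    using small by simp
qed

theorem theorem6:
  fixes n :: nat and U :: "bool list set" and P :: "nat \<Rightarrow> bool list list \<Rightarrow> bool"
  assumes "n \<ge> 2"
    and "\<forall>u\<in>U. length u = n"
    and "card U = 2 ^ n - 2"
  shows "\<exists>k as c. short_choice_solution n P U k as c"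
proof -
  \<comment> \<open>Only the size of \<open>U\<close> matters, not its encoding by \<open>n\<close>-bit strings.\<close>
  have "(2::nat) ^ 2 \<le> 2 ^ n" using assms(1) by (rule power_increasing) simp
  with assms(3) have "card U + 2 = 2 ^ n" "0 < card U" by simp_all
  then have "finite U" "U \<noteq> {}" by (auto intro: card_ge_0_finite)
  with assms(1) \<open>card U + 2 = 2 ^ n\<close> show ?thesis
    by (intro short_choice_total) simp_all
qed

end
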